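(* Let $(\mathfrak{A},\varphi,\tau)$ be a $*$-dynamical system and let $\mathfrak{T}$ be any $\varphi$-total set in $\mathfrak{A}$. Then: (i) If $(\mathfrak{A},\varphi,\tau)$ is ergodic, then $\left\|\frac1n\sum_{k=0}^{n-1}\tau^k(A)-\varphi(A)\right\|_\varphi\to0$ as $n\to\infty$ for every $A\in\mathfrak{A}$. (ii) If $\left\|\frac1n\sum_{k=0}^{n-1}\tau^k(A)-\varphi(A)\right\|_\varphi\to0$ as $n\to\infty$ for every $A\in\mathfrak{T}$, then $(\mathfrak{A},\varphi,\tau)$ is ergodic.
   Context: All algebras are over $\mathbb{C}$. A state on a unital $*$-algebra $\mathfrak{A}$ is a linear functional $\varphi$ with $\varphi(A^*A)\ge0$ for all $A$ and $\varphi(1)=1$. A $*$-dynamical system is a triple $(\mathfrak{A},\varphi,\tau)$ with $\mathfrak{A}$ a unital $*$-algebra, $\varphi$ a state, and $\tau:\mathfrak{A}\to\mathfrak{A}$ linear with $\tau(1)=1$ and $\varphi(\tau(A)^*\tau(A))\le\varphi(A^*A)$ for all $A$. Let $\|A\|_\varphi=\sqrt{\varphi(A^*A)}$ and identify $\alpha\in\mathbb{C}$ with $\alpha1$. The system is ergodic if for every sequence $(A_n)$ with $\|\tau(A_n)-A_n\|_\varphi\to0$ which is Cauchy for $\|\cdot\|_\varphi$ (for every $\varepsilon>0$ there is $N$ with $\|A_m-A_n\|_\varphi\le\varepsilon$ for $m,n>N$), there is $\alpha\in\mathbb{C}$ with $\|A_n-\alpha\|_\varphi\to0$. A subset of $\mathfrak{A}$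 is $\varphi$-total if its linear span is dense in the seminormed space $(\mathfrak{A},\|\cdot\|_\varphi)$. *)

theory Defs
  imports Complex_Main
begin

definition star_algebra :: "(complex \<Rightarrow> 'a::ring_1 \<Rightarrow> 'a) \<Rightarrow> ('a \<Rightarrow> 'a) \<Rightarrow> bool" where
  "star_algebra sm st \<longleftrightarrow>
     vector_space sm \<and>
     (\<forall>c x y. sm c (x * y) = sm c x * y) \<and>
     (\<forall>c x y. sm c (x * y) = x * sm c y) \<and>
     (\<forall>x y. st (x + y) = st x + st y) \<and>
     (\<forall>c x. st (sm c x) = sm (cnj c) (st x)) \<and>
     (\<forall>x y. st (x * y) = st y * st x) \<and>
     (\<forall>x. st (st x) = x)"

definition is_state :: "(complex \<Rightarrow> 'a::ring_1 \<Rightarrow> 'a) \<Rightarrow> ('a \<Rightarrow> 'a) \<Rightarrow> ('a \<Rightarrow> complex) \<Rightarrow> bool" where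
  "is_state sm st \<phi> \<longleftrightarrow>
     Vector_Spaces.linear sm (*) \<phi> \<and>
     (\<forall>A. Im (\<phi> (st A * A)) = 0 \<and> Re (\<phi> (st A * A)) \<ge> 0) \<and>
     \<phi> 1 = 1"

definition phi_norm :: "('a \<Rightarrow> 'a) \<Rightarrow> ('a \<Rightarrow> complex) \<Rightarrow> 'a::ring_1 \<Rightarrow> real" where
  "phi_norm st \<phi> A = sqrt (Re (\<phi> (st A * A)))"

definition star_dynamical_system ::
  "(complex \<Rightarrow> 'a::ring_1 \<Rightarrow> 'a) \<Rightarrow> ('a \<Rightarrow> 'a) \<Rightarrow> ('a \<Rightarrow> complex) \<Rightarrow> ('a \<Rightarrow> 'a) \<Rightarrow> bool" where
  "star_dynamical_system sm st \<phi> \<tau> \<longleftrightarrow>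
     star_algebra sm st \<and> is_state sm st \<phi> \<and>
     Vector_Spaces.linear sm sm \<tau> \<and> \<tau> 1 = 1 \<and>
     (\<forall>A. Re (\<phi> (st (\<tau> A) * \<tau> A)) \<le> Re (\<phi> (st A * A)))"

definition ergodic ::
  "(complex \<Rightarrow> 'a::ring_1 \<Rightarrow> 'a) \<Rightarrow> ('a \<Rightarrow> 'a) \<Rightarrow> ('a \<Rightarrow> complex) \<Rightarrow> ('a \<Rightarrow> 'a) \<Rightarrow> bool" where
  "ergodic sm st \<phi> \<tau> \<longleftrightarrow>
     (\<forall>An :: nat \<Rightarrow> 'a.
        (\<lambda>n. phi_norm st \<phi> (\<tau> (An n) - An n)) \<longlonglongrightarrow> 0 \<longrightarrow>
        (\<forall>\<epsilon>>0. \<exists>N. \<forall>m>N. \<forall>n>N. phi_norm st \<phi> (An m - An n) \<le> \<epsilon>) \<longrightarrow>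
        (\<exists>\<alpha>. (\<lambda>n. phi_norm st \<phi> (An n - sm \<alpha> 1)) \<longlonglongrightarrow> 0))"

definition phi_total ::
  "(complex \<Rightarrow> 'a::ring_1 \<Rightarrow> 'a) \<Rightarrow> ('a \<Rightarrow> 'a) \<Rightarrow> ('a \<Rightarrow> complex) \<Rightarrow> 'a set \<Rightarrow> bool" where
  "phi_total sm st \<phi> T \<longleftrightarrow>
     (\<forall>A. \<forall>\<epsilon>>0. \<exists>B \<in> module.span sm T. phi_norm st \<phi> (A - B) < \<epsilon>)"

definition avg_dev ::
  "(complex \<Rightarrow> 'a::ring_1 \<Rightarrow> 'a) \<Rightarrow> ('a \<Rightarrow> complex) \<Rightarrow> ('a \<Rightarrow> 'a) \<Rightarrow> 'a \<Rightarrow> nat \<Rightarrow> 'a" where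
  "avg_dev sm \<phi> \<tau> A n = sm (1 / of_nat n) (\<Sum>k<n. (\<tau> ^^ k) A) - sm (\<phi> A) 1"

end

theory Submission
  imports Defs
begin

(* The seminorm ||A|| = sqrt (phi (A* A)) comes from the positive sesquilinear form
   <A, B> = phi (A* B), for which tau is a contraction fixing 1, and phi A = <1, A>.
   So everything happens for a contraction tau of a semi-inner-product space with a
   fixed unit vector u.

   (i) The averages of A form a Cauchy sequence.  This is von Neumann's argument, which
   needs no completeness: the squared seminorm has an infimum on the affine hull of the
   orbit of A, the averages of A become almost minimal there, and the parallelogram law
   forces almost minimal elements to be close.  The averages are also asymptotically
   invariant, so ergodicity makes them converge to some multiple of u, and the multiple
   is <u, A> because the functional <u, -> is tau-invariant.

   (ii) Convergence of the averages to <u, A> u is a linear condition, so it passes from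
   T to its span, and by the uniform bound ||avg_n A - <u, A> u|| <= 2 ||A|| to the
   closure of the span, which is everything.  A Cauchy, asymptotically invariant sequence
   X_m is then close to its own averages, hence to <u, X_m> u, and <u, X_m> converges. *)

lemma nonneg_quadratic_discriminant:
  fixes a b r :: real
  assumes nonneg: "\<And>t. 0 \<le> a - 2 * t * r + t\<^sup>2 * b" and "0 \<le> b"
  shows "r\<^sup>2 \<le> a * b"
proof (cases "b = 0")
  case True
  have "r = 0"
  proof (rule ccontr)
    assume "r \<noteq> 0"
    then show False
      using nonneg[of "(a + 1) / (2 * r)"] True by (simp add: field_simps)
  qed
  then show ?thesis
    using True by simp
next
  case False
  with \<open>0 \<le> b\<close> have "0 < b"
    by simp
  then show ?thesis
    using nonneg[of "r / b"] by (simp add: field_simps power2_eq_square)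
qed

locale semi_inner_product = vector_space sm
  for sm :: "complex \<Rightarrow> 'a::ab_group_add \<Rightarrow> 'a" +
  fixes ip :: "'a \<Rightarrow> 'a \<Rightarrow> complex"
  assumes ip_add_left: "ip (A + B) C = ip A C + ip B C"
    and ip_add_right: "ip A (B + C) = ip A B + ip A C"
    and ip_scale_left: "ip (sm c A) B = cnj c * ip A B"
    and ip_scale_right: "ip A (sm c B) = c * ip A B"
    and ip_self_real: "Im (ip A A) = 0"
    and ip_self_nonneg: "0 \<le> Re (ip A A)"
begin

lemma ip_diff_left: "ip (A - B) C = ip A C - ip B C"
  using ip_add_left[of "A - B" B C] by (simp add: eq_diff_eq)

lemma ip_diff_right: "ip A (B - C) = ip A B - ip A C"
  using ip_add_right[of A "B - C" C] by (simp add: eq_diff_eq)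

lemma ip_zero_left [simp]: "ip 0 B = 0"
  using ip_diff_left[of 0 0 B] by simp

lemma ip_zero_right [simp]: "ip A 0 = 0"
  using ip_diff_right[of A 0 0] by simp

lemma ip_sum_right: "ip A (sum f S) = (\<Sum>k\<in>S. ip A (f k))"
  by (induction S rule: infinite_finite_induct) (simp_all add: ip_add_right)

(* Hermitian symmetry follows from positivity: compare the imaginary parts of
   <A + B, A + B> and <A + i B, A + i B>. *)
lemma ip_commute: "ip B A = cnj (ip A B)"
proof -
  have "Im (ip (A + B) (A + B)) = 0" "Im (ip (A + sm \<i> B) (A + sm \<i> B)) = 0"
    "Im (ip A A) = 0" "Im (ip B B) = 0"
    by (fact ip_self_real)+
  then show ?thesis
    by (simp add: ip_add_left ip_add_right ip_scale_left ip_scale_right complex_eq_iff)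
qed

definition snorm :: "'a \<Rightarrow> real" where
  "snorm A = sqrt (Re (ip A A))"

definition snorm_Cauchy :: "(nat \<Rightarrow> 'a) \<Rightarrow> bool" where
  "snorm_Cauchy X \<longleftrightarrow> (\<forall>\<epsilon>>0. \<exists>K. \<forall>m>K. \<forall>n>K. snorm (X m - X n) \<le> \<epsilon>)"

lemma snorm_nonneg: "0 \<le> snorm A"
  by (simp add: snorm_def ip_self_nonneg)

lemma snorm_power2: "(snorm A)\<^sup>2 = Re (ip A A)"
  by (simp add: snorm_def ip_self_nonneg)

lemma ip_self: "ip A A = of_real ((snorm A)\<^sup>2)"
  by (simp add: snorm_power2 complex_eq_iff ip_self_real)

lemma snorm_zero [simp]: "snorm 0 = 0"
  by (simp add: snorm_def)

lemma snorm_scale: "snorm (sm c A) = cmod c * snorm A"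
proof -
  have "ip (sm c A) (sm c A) = (cnj c * c) * ip A A"
    by (simp add: ip_scale_left ip_scale_right)
  also have "\<dots> = of_real ((cmod c * snorm A)\<^sup>2)"
    by (simp add: ip_self power_mult_distrib mult.commute[of "cnj c"] flip: complex_norm_square)
  finally have "(snorm (sm c A))\<^sup>2 = (cmod c * snorm A)\<^sup>2"
    by (simp add: snorm_power2 del: of_real_power)
  then show ?thesis
    by (simp add: snorm_nonneg)
qed

lemma snorm_minus: "snorm (- A) = snorm A"
  using snorm_scale[of "-1" A] by simp

lemma snorm_diff_commute: "snorm (A - B) = snorm (B - A)"
  using snorm_minus[of "A - B"] by simp

lemma snorm_add_power2: "(snorm (A + B))\<^sup>2 = (snorm A)\<^sup>2 + (snorm B)\<^sup>2 + 2 * Re (ip A B)"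
  by (simp add: snorm_power2 ip_add_left ip_add_right ip_commute[of A B])

lemma snorm_diff_power2: "(snorm (A - B))\<^sup>2 = (snorm A)\<^sup>2 + (snorm B)\<^sup>2 - 2 * Re (ip A B)"
  by (simp add: snorm_power2 ip_diff_left ip_diff_right ip_commute[of A B])

lemma parallelogram_law:
  "(snorm (A + B))\<^sup>2 + (snorm (A - B))\<^sup>2 = 2 * (snorm A)\<^sup>2 + 2 * (snorm B)\<^sup>2"
  by (simp add: snorm_add_power2 snorm_diff_power2)

lemma Re_ip_le: "Re (ip A B) \<le> snorm A * snorm B"
proof -
  have "0 \<le> (snorm A)\<^sup>2 - 2 * t * Re (ip A B) + t\<^sup>2 * (snorm B)\<^sup>2" for t
    using snorm_diff_power2[of A "sm (of_real t) B"]
      zero_le_power2[of "snorm (A - sm (of_real t) B)"]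
    by (simp add: snorm_scale ip_scale_right power_mult_distrib)
  then have "(Re (ip A B))\<^sup>2 \<le> (snorm A * snorm B)\<^sup>2"
    unfolding power_mult_distrib by (rule nonneg_quadratic_discriminant) simp
  then show ?thesis
    by (rule power2_le_imp_le) (simp add: snorm_nonneg)
qed

theorem Cauchy_Schwarz: "cmod (ip A B) \<le> snorm A * snorm B"
proof (cases "ip A B = 0")
  case True
  then show ?thesis
    by (simp add: snorm_nonneg)
next
  case False
  have "(cmod (ip A B))\<^sup>2 = Re (ip A (sm (cnj (ip A B)) B))"
    using complex_mult_cnj[of "ip A B"] by (simp add: ip_scale_right cmod_power2 mult.commute)
  also have "\<dots> \<le> cmod (ip A B) * (snorm A * snorm B)"
    using Re_ip_le[of A "sm (cnj (ip A B)) B"] by (simp add: snorm_scale mult_ac)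
  finally show ?thesis
    using False by (simp add: power2_eq_square)
qed

lemma snorm_triangle: "snorm (A + B) \<le> snorm A + snorm B"
proof (rule power2_le_imp_le)
  show "(snorm (A + B))\<^sup>2 \<le> (snorm A + snorm B)\<^sup>2"
    using Re_ip_le[of A B] by (simp add: snorm_add_power2 power2_sum)
qed (simp add: snorm_nonneg)

lemma snorm_triangle_diff: "snorm (A - C) \<le> snorm (A - B) + snorm (B - C)"
  using snorm_triangle[of "A - B" "B - C"] by simp

lemma snorm_sum: "snorm (sum f S) \<le> (\<Sum>k\<in>S. snorm (f k))"
proof (induction S rule: infinite_finite_induct)
  case (insert k S)
  then show ?case
    using snorm_triangle[of "f k" "sum f S"] by simp
qed simp_all

lemma snorm_tendsto_zeroI:
  "eventually (\<lambda>n. snorm (X n) \<le> g n) F \<Longrightarrow> (g \<longlongrightarrow> 0) F \<Longrightarrow> ((\<lambda>n. snorm (X n)) \<longlongrightarrow> 0) F"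
  by (rule tendsto_sandwich[of "\<lambda>_. 0" _ _ g]) (auto simp: snorm_nonneg)

lemma subspace_snorm_vanishing:
  assumes "\<And>n. Vector_Spaces.linear sm sm (D n)"
  shows "subspace {A. (\<lambda>n. snorm (D n A)) \<longlonglongrightarrow> 0}"
proof (rule subspaceI)
  have D_add: "D n (A + B) = D n A + D n B" and D_scale: "D n (sm c A) = sm c (D n A)" for n A B c
    using assms[of n] by (simp_all add: Vector_Spaces.linear_iff)
  show "0 \<in> {A. (\<lambda>n. snorm (D n A)) \<longlonglongrightarrow> 0}"
    using D_scale[of _ 0 0] by simp
  show "A + B \<in> {A. (\<lambda>n. snorm (D n A)) \<longlonglongrightarrow> 0}"
    if "A \<in> {A. (\<lambda>n. snorm (D n A)) \<longlonglongrightarrow> 0}" "B \<in> {A. (\<lambda>n. snorm (D n A)) \<longlonglongrightarrow> 0}" for A B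
    using that unfolding mem_Collect_eq
    by (auto simp: D_add snorm_triangle
        intro!: snorm_tendsto_zeroI[where g = "\<lambda>n. snorm (D n A) + snorm (D n B)"] always_eventually
        intro: tendsto_add_zero)
  show "sm c A \<in> {A. (\<lambda>n. snorm (D n A)) \<longlonglongrightarrow> 0}"
    if "A \<in> {A. (\<lambda>n. snorm (D n A)) \<longlonglongrightarrow> 0}" for c A
    using that by (simp add: D_scale snorm_scale tendsto_mult_right_zero)
qed

lemma snorm_vanishing_on_dense:
  assumes linear: "\<And>n. Vector_Spaces.linear sm sm (D n)"
    and bounded: "\<And>n A. snorm (D n A) \<le> C * snorm A"
    and vanishing: "\<And>A. A \<in> T \<Longrightarrow> (\<lambda>n. snorm (D n A)) \<longlonglongrightarrow> 0"
    and dense: "\<forall>A. \<forall>\<epsilon>>0. \<exists>B\<in>span T. snorm (A - B) < \<epsilon>"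
  shows "(\<lambda>n. snorm (D n A)) \<longlonglongrightarrow> 0"
proof (rule order_tendstoI)
  fix r :: real
  assume "0 < r"
  then have "0 < r / (2 * (\<bar>C\<bar> + 1))"
    by (simp add: add_pos_nonneg)
  with dense obtain B where B: "B \<in> span T" "snorm (A - B) < r / (2 * (\<bar>C\<bar> + 1))"
    by blast
  have "span T \<subseteq> {A. (\<lambda>n. snorm (D n A)) \<longlonglongrightarrow> 0}"
    using vanishing by (intro span_minimal subspace_snorm_vanishing linear) auto
  with B(1) \<open>0 < r\<close> have "eventually (\<lambda>n. snorm (D n B) < r / 2) sequentially"
    by (auto dest!: order_tendstoD(2)[of _ 0 _ "r / 2"])
  then show "eventually (\<lambda>n. snorm (D n A) < r) sequentially"
  proof (rule eventually_mono)
    fix n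
    assume "snorm (D n B) < r / 2"
    have "D n A = D n (A - B) + D n B"
      using linear[of n] diff_add_cancel[of A B] by (metis Vector_Spaces.linear_iff)
    then have "snorm (D n A) \<le> C * snorm (A - B) + snorm (D n B)"
      using snorm_triangle[of "D n (A - B)" "D n B"] bounded[of n "A - B"] by simp
    also have "C * snorm (A - B) \<le> (\<bar>C\<bar> + 1) * snorm (A - B)"
      by (intro mult_right_mono snorm_nonneg) simp
    also have "(\<bar>C\<bar> + 1) * snorm (A - B) < r / 2"
      using B(2) by (simp add: field_simps)
    finally show "snorm (D n A) < r"
      using \<open>snorm (D n B) < r / 2\<close> by simp
  qed
qed (auto intro!: always_eventually order_less_le_trans[OF _ snorm_nonneg])

end

locale sip_contraction = semi_inner_product +
  fixes \<tau> :: "'a \<Rightarrow> 'a"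
  assumes linear_\<tau>: "Vector_Spaces.linear sm sm \<tau>"
    and snorm_\<tau>_le: "snorm (\<tau> A) \<le> snorm A"
begin

lemma linear_funpow_\<tau>: "Vector_Spaces.linear sm sm (\<tau> ^^ k)"
  by (induction k)
    (simp_all only: funpow.simps linear_id Vector_Spaces.linear_compose[OF _ linear_\<tau>])

lemmas \<tau>_add = module_hom.add[OF module_hom_linearI[OF linear_\<tau>]]
  and \<tau>_scale = module_hom.scale[OF module_hom_linearI[OF linear_\<tau>]]
  and \<tau>_sum = module_hom.sum[OF module_hom_linearI[OF linear_\<tau>]]
  and funpow_\<tau>_add = module_hom.add[OF module_hom_linearI[OF linear_funpow_\<tau>]]
  and funpow_\<tau>_diff = module_hom.diff[OF module_hom_linearI[OF linear_funpow_\<tau>]]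
  and funpow_\<tau>_scale = module_hom.scale[OF module_hom_linearI[OF linear_funpow_\<tau>]]

lemma snorm_funpow_\<tau>_le: "snorm ((\<tau> ^^ k) A) \<le> snorm A"
  by (induction k) (auto intro: order_trans[OF snorm_\<tau>_le])

lemma snorm_funpow_\<tau>_diff_le: "snorm ((\<tau> ^^ k) A - A) \<le> real k * snorm (\<tau> A - A)"
proof (induction k)
  case (Suc k)
  have "(\<tau> ^^ Suc k) A - A = (\<tau> ^^ k) (\<tau> A - A) + ((\<tau> ^^ k) A - A)"
    by (simp add: funpow_\<tau>_diff funpow_swap1)
  then have "snorm ((\<tau> ^^ Suc k) A - A) \<le> snorm ((\<tau> ^^ k) (\<tau> A - A)) + snorm ((\<tau> ^^ k) A - A)"
    by (simp only: snorm_triangle)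
  also have "\<dots> \<le> snorm (\<tau> A - A) + real k * snorm (\<tau> A - A)"
    using Suc.IH by (intro add_mono snorm_funpow_\<tau>_le)
  finally show ?case
    by (simp add: algebra_simps)
qed simp

definition average :: "nat \<Rightarrow> 'a \<Rightarrow> 'a" where
  "average n A = sm (1 / of_nat n) (\<Sum>k<n. (\<tau> ^^ k) A)"

lemma linear_average: "Vector_Spaces.linear sm sm (average n)"
  by (simp add: Vector_Spaces.linear_iff vector_space_axioms average_def funpow_\<tau>_add funpow_\<tau>_scale
      sum.distrib scale_right_distrib scale_sum_right mult.commute)

lemmas average_add = module_hom.add[OF module_hom_linearI[OF linear_average]]
  and average_diff = module_hom.diff[OF module_hom_linearI[OF linear_average]]
  and average_scale = module_hom.scale[OF module_hom_linearI[OF linear_average]]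

lemma snorm_average_le: "snorm (average n A) \<le> snorm A"
proof (cases "n = 0")
  case False
  have "snorm (average n A) = snorm (\<Sum>k<n. (\<tau> ^^ k) A) / real n"
    by (simp add: average_def snorm_scale norm_divide)
  also have "\<dots> \<le> (\<Sum>k<n. snorm ((\<tau> ^^ k) A)) / real n"
    by (intro divide_right_mono snorm_sum) simp
  also have "\<dots> \<le> (\<Sum>k<n. snorm A) / real n"
    by (intro divide_right_mono sum_mono snorm_funpow_\<tau>_le) simp
  also have "\<dots> = snorm A"
    using False by simp
  finally show ?thesis .
qed (simp add: average_def snorm_nonneg)

lemma \<tau>_average: "\<tau> (average n A) = average n (\<tau> A)"
  by (simp add: average_def \<tau>_scale \<tau>_sum funpow_swap1)

lemma average_\<tau>_diff: "average n (\<tau> A) - average n A = sm (1 / of_nat n) ((\<tau> ^^ n) A - A)"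
proof -
  have "(\<Sum>k<n. (\<tau> ^^ k) (\<tau> A)) - (\<Sum>k<n. (\<tau> ^^ k) A) = (\<Sum>k<n. (\<tau> ^^ Suc k) A - (\<tau> ^^ k) A)"
    by (simp add: sum_subtractf funpow_swap1)
  also have "\<dots> = (\<tau> ^^ n) A - A"
    by (subst sum_lessThan_telescope) simp
  finally show ?thesis
    by (simp add: average_def flip: scale_right_diff_distrib)
qed

lemma snorm_average_\<tau>_diff_le: "snorm (average n (\<tau> A) - average n A) \<le> 2 * snorm A / real n"
proof -
  have "snorm ((\<tau> ^^ n) A - A) \<le> 2 * snorm A"
    using snorm_triangle[of "(\<tau> ^^ n) A" "- A"] snorm_funpow_\<tau>_le[of n A] by (simp add: snorm_minus)
  then show ?thesis
    by (simp add: average_\<tau>_diff snorm_scale norm_divide divide_right_mono)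
qed

lemma snorm_average_diff_le:
  assumes "1 \<le> n"
  shows "snorm (average n A - A) \<le> real n * snorm (\<tau> A - A)"
proof -
  have "sm (1 / of_nat n) (\<Sum>k<n. A) = A"
    using assms by (simp add: sum_constant_scale)
  then have "average n A - A = sm (1 / of_nat n) (\<Sum>k<n. (\<tau> ^^ k) A - A)"
    by (simp add: average_def sum_subtractf scale_right_diff_distrib)
  then have "snorm (average n A - A) = snorm (\<Sum>k<n. (\<tau> ^^ k) A - A) / real n"
    by (simp add: snorm_scale norm_divide)
  also have "\<dots> \<le> (\<Sum>k<n. real k * snorm (\<tau> A - A)) / real n"
    by (intro divide_right_mono order_trans[OF snorm_sum] sum_mono snorm_funpow_\<tau>_diff_le) simp_all
  also have "\<dots> \<le> (\<Sum>k<n. real n * snorm (\<tau> A - A)) / real n"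
    by (intro divide_right_mono sum_mono mult_right_mono snorm_nonneg) simp_all
  also have "\<dots> = real n * snorm (\<tau> A - A)"
    using assms by simp
  finally show ?thesis .
qed

(* The affine rather than the convex hull: all that is used is closure under midpoints and
   the O(1/n) bound of affine_orbit_hull_average_bound, and affine combinations need no
   side conditions. *)
inductive_set affine_orbit_hull :: "'a \<Rightarrow> 'a set" for x where
  affine_orbit_hull_base: "x \<in> affine_orbit_hull x"
| affine_orbit_hull_\<tau>: "y \<in> affine_orbit_hull x \<Longrightarrow> \<tau> y \<in> affine_orbit_hull x"
| affine_orbit_hull_comb:
    "y \<in> affine_orbit_hull x \<Longrightarrow> z \<in> affine_orbit_hull x \<Longrightarrow>
      sm t y + sm (1 - t) z \<in> affine_orbit_hull x"

lemma funpow_\<tau>_in_affine_orbit_hull: "(\<tau> ^^ k) x \<in> affine_orbit_hull x"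
  by (induction k) (simp_all add: affine_orbit_hull.intros)

lemma average_in_affine_orbit_hull: "1 \<le> n \<Longrightarrow> average n x \<in> affine_orbit_hull x"
proof (induction n)
  case (Suc n)
  show ?case
  proof (cases "n = 0")
    case True
    then show ?thesis
      by (simp add: average_def affine_orbit_hull_base)
  next
    case False
    define t :: complex where "t = of_nat n / of_nat (Suc n)"
    have "t * (1 / of_nat n) = 1 / of_nat (Suc n)" "1 - t = 1 / of_nat (Suc n)"
      using False of_nat_neq_0[of n, where 'a = complex] by (simp_all add: t_def field_simps)
    then have "average (Suc n) x = sm t (average n x) + sm (1 - t) ((\<tau> ^^ n) x)"
      by (simp add: average_def scale_right_distrib)
    then show ?thesis
      using False Suc.IH by (simp add: affine_orbit_hull_comb funpow_\<tau>_in_affine_orbit_hull)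
  qed
qed simp

lemma affine_orbit_hull_average_bound:
  "y \<in> affine_orbit_hull x \<Longrightarrow> \<exists>C. \<forall>n. snorm (average n y - average n x) \<le> C / real n"
proof (induction rule: affine_orbit_hull.induct)
  case affine_orbit_hull_base
  show ?case
    by (intro exI[of _ 0]) simp
next
  case (affine_orbit_hull_\<tau> y)
  then obtain C where C: "\<And>n. snorm (average n y - average n x) \<le> C / real n"
    by blast
  have "snorm (average n (\<tau> y) - average n x) \<le> (2 * snorm y + C) / real n" for n
    using snorm_triangle_diff[of "average n (\<tau> y)" "average n x" "average n y"]
      snorm_average_\<tau>_diff_le[of n y] C[of n]
    by (simp add: add_divide_distrib)
  then show ?case
    by blast
next
  case (affine_orbit_hull_comb y z t)
  then obtain C D where C: "\<And>n. snorm (average n y - average n x) \<le> C / real n"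
    and D: "\<And>n. snorm (average n z - average n x) \<le> D / real n"
    by blast
  have "average n (sm t y + sm (1 - t) z) = sm t (average n y) + sm (1 - t) (average n z)" for n
    by (simp only: average_add average_scale)
  then have "average n (sm t y + sm (1 - t) z) - average n x
      = sm t (average n y - average n x) + sm (1 - t) (average n z - average n x)" for n
    by (simp add: algebra_simps)
  then have "snorm (average n (sm t y + sm (1 - t) z) - average n x)
      \<le> (cmod t * C + cmod (1 - t) * D) / real n" for n
    using snorm_triangle[of "sm t (average n y - average n x)"
        "sm (1 - t) (average n z - average n x)"]
      mult_left_mono[OF C[of n], of "cmod t"] mult_left_mono[OF D[of n], of "cmod (1 - t)"]
    by (simp add: snorm_scale add_divide_distrib)
  then show ?case
    by blast
qed

definition affine_orbit_hull_inf :: "'a \<Rightarrow> real" where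
  "affine_orbit_hull_inf x = Inf ((\<lambda>y. (snorm y)\<^sup>2) ` affine_orbit_hull x)"

lemma affine_orbit_hull_inf_le: "y \<in> affine_orbit_hull x \<Longrightarrow> affine_orbit_hull_inf x \<le> (snorm y)\<^sup>2"
  unfolding affine_orbit_hull_inf_def by (rule cInf_lower) (auto intro: bdd_belowI[of _ 0])

lemma eventually_average_near_affine_orbit_hull_inf:
  assumes "0 < e"
  shows "eventually (\<lambda>n. (snorm (average n x))\<^sup>2 < affine_orbit_hull_inf x + e) sequentially"
proof -
  have "(\<lambda>y. (snorm y)\<^sup>2) ` affine_orbit_hull x \<noteq> {}"
    using affine_orbit_hull_base by blast
  then obtain y where y: "y \<in> affine_orbit_hull x" "(snorm y)\<^sup>2 < affine_orbit_hull_inf x + e"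
    using cInf_lessD[of "(\<lambda>y. (snorm y)\<^sup>2) ` affine_orbit_hull x" "affine_orbit_hull_inf x + e"]
      assms
    unfolding affine_orbit_hull_inf_def by fastforce
  obtain C where C: "\<And>n. snorm (average n y - average n x) \<le> C / real n"
    using affine_orbit_hull_average_bound[OF y(1)] by blast
  have "(\<lambda>n. snorm y + C / real n) \<longlonglongrightarrow> snorm y + 0"
    by (intro tendsto_add tendsto_const lim_const_over_n)
  moreover have "snorm y < sqrt (affine_orbit_hull_inf x + e)"
    using y(2) by (rule real_less_rsqrt)
  ultimately have
    "eventually (\<lambda>n. snorm y + C / real n < sqrt (affine_orbit_hull_inf x + e)) sequentially"
    by (simp add: order_tendstoD(2))
  then show ?thesis
  proof (rule eventually_mono)
    fix n
    assume less: "snorm y + C / real n < sqrt (affine_orbit_hull_inf x + e)"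
    have "snorm (average n x) \<le> snorm (average n y) + snorm (average n x - average n y)"
      using snorm_triangle[of "average n y" "average n x - average n y"] by simp
    also have "\<dots> \<le> snorm y + C / real n"
      using C[of n] snorm_average_le[of n y] snorm_diff_commute[of "average n x" "average n y"]
      by linarith
    finally have "snorm (average n x) < sqrt (affine_orbit_hull_inf x + e)"
      using less by simp
    moreover from this have "0 < sqrt (affine_orbit_hull_inf x + e)"
      using snorm_nonneg[of "average n x"] by linarith
    ultimately show "(snorm (average n x))\<^sup>2 < affine_orbit_hull_inf x + e"
      using real_sqrt_less_iff[of "(snorm (average n x))\<^sup>2" "affine_orbit_hull_inf x + e"]
      by (simp add: snorm_nonneg)
  qed
qed

theorem average_snorm_Cauchy: "snorm_Cauchy (\<lambda>n. average n x)"
  unfolding snorm_Cauchy_def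
proof (intro allI impI)
  fix \<epsilon> :: real
  assume "0 < \<epsilon>"
  then have "eventually (\<lambda>n. 1 \<le> n \<and>
      (snorm (average n x))\<^sup>2 < affine_orbit_hull_inf x + \<epsilon>\<^sup>2 / 4) sequentially"
    by (intro eventually_conj eventually_ge_at_top eventually_average_near_affine_orbit_hull_inf)
      simp
  then obtain K where K: "\<And>n. K \<le> n \<Longrightarrow>
      1 \<le> n \<and> (snorm (average n x))\<^sup>2 < affine_orbit_hull_inf x + \<epsilon>\<^sup>2 / 4"
    unfolding eventually_sequentially by blast
  have "snorm (average m x - average n x) \<le> \<epsilon>" if "m > K" "n > K" for m n
  proof -
    let ?a = "average m x" and ?b = "average n x"
    have "sm (1 / 2) ?a + sm (1 - 1 / 2) ?b \<in> affine_orbit_hull x"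
      using K[of m] K[of n] that
      by (intro affine_orbit_hull_comb[OF average_in_affine_orbit_hull average_in_affine_orbit_hull])
        simp_all
    then have "affine_orbit_hull_inf x \<le> (snorm (sm (1 / 2) (?a + ?b)))\<^sup>2"
      by (intro affine_orbit_hull_inf_le) (simp add: scale_right_distrib)
    moreover have "snorm (sm (1 / 2) (?a + ?b)) = snorm (?a + ?b) / 2"
      by (simp add: snorm_scale)
    ultimately have "4 * affine_orbit_hull_inf x \<le> (snorm (?a + ?b))\<^sup>2"
      by (simp add: power_divide)
    then have "(snorm (?a - ?b))\<^sup>2 \<le> \<epsilon>\<^sup>2"
      using parallelogram_law[of ?a ?b] K[of m] K[of n] that by linarith
    then show ?thesis
      by (rule power2_le_imp_le) (use \<open>0 < \<epsilon>\<close> in simp)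
  qed
  then show "\<exists>K. \<forall>m>K. \<forall>n>K. snorm (average m x - average n x) \<le> \<epsilon>"
    by blast
qed

end

locale sip_contraction_unit = sip_contraction +
  fixes u :: 'a
  assumes \<tau>_unit: "\<tau> u = u"
    and snorm_unit: "snorm u = 1"
begin

lemma ip_unit_unit: "ip u u = 1"
  by (simp add: ip_self snorm_unit)

lemma cmod_ip_unit_le: "cmod (ip u A) \<le> snorm A"
  using Cauchy_Schwarz[of u A] by (simp add: snorm_unit)

lemma snorm_add_unit_power2:
  "(snorm (A + sm t u))\<^sup>2 = (snorm A)\<^sup>2 + (cmod t)\<^sup>2 + 2 * Re (t * cnj (ip u A))"
  by (simp add: snorm_add_power2 snorm_scale snorm_unit ip_scale_right ip_commute[of A u])

(* If <u, tau A> differed from <u, A>, then tau would expand A + t u for suitable large t. *)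
lemma ip_unit_\<tau>: "ip u (\<tau> A) = ip u A"
proof (rule ccontr)
  define d where "d = ip u (\<tau> A) - ip u A"
  assume "ip u (\<tau> A) \<noteq> ip u A"
  then have "0 < cmod d"
    by (simp add: d_def)
  have bound: "2 * Re (t * cnj d) \<le> (snorm A)\<^sup>2" for t
  proof -
    have "snorm (\<tau> A + sm t u) \<le> snorm (A + sm t u)"
      using snorm_\<tau>_le[of "A + sm t u"] by (simp add: \<tau>_add \<tau>_scale \<tau>_unit)
    then have "(snorm (\<tau> A + sm t u))\<^sup>2 \<le> (snorm (A + sm t u))\<^sup>2"
      by (simp add: power_mono snorm_nonneg)
    then have "(snorm (\<tau> A))\<^sup>2 + 2 * Re (t * cnj (ip u (\<tau> A)))
        \<le> (snorm A)\<^sup>2 + 2 * Re (t * cnj (ip u A))"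
      by (simp add: snorm_add_unit_power2)
    moreover have "Re (t * cnj d) = Re (t * cnj (ip u (\<tau> A))) - Re (t * cnj (ip u A))"
      by (simp add: d_def algebra_simps)
    ultimately show ?thesis
      using zero_le_power2[of "snorm (\<tau> A)"] by linarith
  qed
  define s where "s = ((snorm A)\<^sup>2 + 1) / (2 * (cmod d)\<^sup>2)"
  have "Re (of_real s * d * cnj d) = ((snorm A)\<^sup>2 + 1) / 2"
    using \<open>0 < cmod d\<close> by (simp add: s_def mult.assoc flip: complex_norm_square)
  then show False
    using bound[of "of_real s * d"] by (simp add: field_simps)
qed

lemma ip_unit_funpow_\<tau>: "ip u ((\<tau> ^^ k) A) = ip u A"
  by (induction k) (simp_all add: ip_unit_\<tau>)

lemma ip_unit_average: "1 \<le> n \<Longrightarrow> ip u (average n A) = ip u A"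
  by (simp add: average_def ip_scale_right ip_sum_right ip_unit_funpow_\<tau>)

definition sip_ergodic :: bool where
  "sip_ergodic \<longleftrightarrow> (\<forall>X. (\<lambda>n. snorm (\<tau> (X n) - X n)) \<longlonglongrightarrow> 0 \<longrightarrow> snorm_Cauchy X \<longrightarrow>
      (\<exists>\<alpha>. (\<lambda>n. snorm (X n - sm \<alpha> u)) \<longlonglongrightarrow> 0))"

theorem sip_ergodic_imp_average_tendsto:
  assumes sip_ergodic
  shows "(\<lambda>n. snorm (average n A - sm (ip u A) u)) \<longlonglongrightarrow> 0"
proof -
  have "(\<lambda>n. snorm (\<tau> (average n A) - average n A)) \<longlonglongrightarrow> 0"
    by (rule snorm_tendsto_zeroI[where g = "\<lambda>n. 2 * snorm A / real n"])
      (simp_all add: \<tau>_average snorm_average_\<tau>_diff_le lim_const_over_n)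
  then obtain \<alpha> where \<alpha>: "(\<lambda>n. snorm (average n A - sm \<alpha> u)) \<longlonglongrightarrow> 0"
    using assms[unfolded sip_ergodic_def, rule_format, OF _ average_snorm_Cauchy] by blast
  have "cmod (ip u A - \<alpha>) \<le> snorm (average n A - sm \<alpha> u)" if "1 \<le> n" for n
    using cmod_ip_unit_le[of "average n A - sm \<alpha> u"] that
    by (simp add: ip_diff_right ip_scale_right ip_unit_unit ip_unit_average)
  then have "cmod (ip u A - \<alpha>) \<le> 0"
    by (intro LIMSEQ_le_const[OF \<alpha>]) blast
  then show ?thesis
    using \<alpha> by simp
qed

lemma linear_average_deviation: "Vector_Spaces.linear sm sm (\<lambda>A. average n A - sm (ip u A) u)"
  by (simp add: Vector_Spaces.linear_iff vector_space_axioms average_add average_scale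
      ip_add_right ip_scale_right scale_left_distrib algebra_simps)

lemma snorm_average_deviation_le: "snorm (average n A - sm (ip u A) u) \<le> 2 * snorm A"
  using snorm_triangle[of "average n A" "- sm (ip u A) u"] snorm_average_le[of n A]
    cmod_ip_unit_le[of A]
  by (simp add: snorm_minus snorm_scale snorm_unit)

lemma average_tendsto_on_dense:
  assumes "\<forall>A. \<forall>\<epsilon>>0. \<exists>B\<in>span T. snorm (A - B) < \<epsilon>"
    and "\<And>A. A \<in> T \<Longrightarrow> (\<lambda>n. snorm (average n A - sm (ip u A) u)) \<longlonglongrightarrow> 0"
  shows "(\<lambda>n. snorm (average n A - sm (ip u A) u)) \<longlonglongrightarrow> 0"
  using linear_average_deviation snorm_average_deviation_le assms(2,1)
  by (rule snorm_vanishing_on_dense[where D = "\<lambda>n A. average n A - sm (ip u A) u"])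

lemma snorm_sub_ip_unit_le:
  assumes "1 \<le> n"
  shows "snorm (A - sm (ip u A) u)
    \<le> snorm (average n A - sm (ip u A) u) + 2 * snorm (A - B) + real n * snorm (\<tau> B - B)"
proof -
  have split: "average n A - A = average n (A - B) + (average n B - B) + (B - A)"
    by (simp add: average_diff)
  have "snorm (average n A - A) \<le> snorm (A - B) + real n * snorm (\<tau> B - B) + snorm (A - B)"
    unfolding split using snorm_triangle[of "average n (A - B) + (average n B - B)" "B - A"]
      snorm_triangle[of "average n (A - B)" "average n B - B"]
      snorm_average_le[of n "A - B"] snorm_average_diff_le[OF assms, of B]
      snorm_diff_commute[of B A]
    by linarith
  then show ?thesis
    using snorm_triangle_diff[of A "sm (ip u A) u" "average n A"]
      snorm_diff_commute[of A "average n A"]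
    by linarith
qed

lemma snorm_sub_ip_unit_tendsto_zero:
  assumes average_tendsto: "\<And>A. (\<lambda>n. snorm (average n A - sm (ip u A) u)) \<longlonglongrightarrow> 0"
    and invariant: "(\<lambda>n. snorm (\<tau> (X n) - X n)) \<longlonglongrightarrow> 0" and "snorm_Cauchy X"
  shows "(\<lambda>m. snorm (X m - sm (ip u (X m)) u)) \<longlonglongrightarrow> 0"
proof (rule order_tendstoI)
  fix r :: real
  assume "0 < r"
  then obtain K where K: "\<And>m p. K < m \<Longrightarrow> K < p \<Longrightarrow> snorm (X m - X p) \<le> r / 4"
    using \<open>snorm_Cauchy X\<close> unfolding snorm_Cauchy_def
    by (meson zero_less_divide_iff zero_less_numeral)
  have "snorm (X m - sm (ip u (X m)) u) \<le> 3 * (r / 4)" if "K < m" for m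
  proof (rule field_le_epsilon)
    fix e :: real
    assume "0 < e"
    then have
      "eventually (\<lambda>n. 1 \<le> n \<and> snorm (average n (X m) - sm (ip u (X m)) u) < e) sequentially"
      by (intro eventually_conj eventually_ge_at_top order_tendstoD(2)[OF average_tendsto])
    then obtain n where n: "1 \<le> n" "snorm (average n (X m) - sm (ip u (X m)) u) < e"
      using eventually_happens'[OF sequentially_bot] by blast
    have "(\<lambda>p. real n * snorm (\<tau> (X p) - X p)) \<longlonglongrightarrow> 0"
      using invariant by (rule tendsto_mult_right_zero)
    moreover have "0 < r / 4"
      using \<open>0 < r\<close> by simp
    ultimately have "eventually (\<lambda>p. K < p \<and> real n * snorm (\<tau> (X p) - X p) < r / 4) sequentially"
      by (intro eventually_conj eventually_gt_at_top order_tendstoD(2))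
    then obtain p where p: "K < p" "real n * snorm (\<tau> (X p) - X p) < r / 4"
      using eventually_happens'[OF sequentially_bot] by blast
    show "snorm (X m - sm (ip u (X m)) u) \<le> 3 * (r / 4) + e"
      using snorm_sub_ip_unit_le[OF n(1), of "X m" "X p"] n(2) p(2) K[OF that p(1)] by linarith
  qed
  then have "snorm (X m - sm (ip u (X m)) u) < r" if "K < m" for m
    using that \<open>0 < r\<close> by fastforce
  then show "eventually (\<lambda>m. snorm (X m - sm (ip u (X m)) u) < r) sequentially"
    by (auto simp: eventually_sequentially intro!: exI[of _ "Suc K"])
qed (auto intro!: always_eventually order_less_le_trans[OF _ snorm_nonneg])

lemma Cauchy_ip_unit:
  assumes "snorm_Cauchy X"
  shows "Cauchy (\<lambda>m. ip u (X m))"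
proof (rule CauchyI)
  fix e :: real
  assume "0 < e"
  then obtain K where K: "\<forall>m>K. \<forall>p>K. snorm (X m - X p) \<le> e / 2"
    using assms unfolding snorm_Cauchy_def by (meson half_gt_zero)
  have "norm (ip u (X m) - ip u (X p)) < e" if "Suc K \<le> m" "Suc K \<le> p" for m p
  proof -
    have "norm (ip u (X m) - ip u (X p)) \<le> snorm (X m - X p)"
      using cmod_ip_unit_le[of "X m - X p"] by (simp add: ip_diff_right)
    also have "\<dots> \<le> e / 2"
      using K that by simp
    finally show ?thesis
      using \<open>0 < e\<close> by simp
  qed
  then show "\<exists>M. \<forall>m\<ge>M. \<forall>p\<ge>M. norm (ip u (X m) - ip u (X p)) < e"
    by blast
qed

theorem average_tendsto_imp_sip_ergodic:
  assumes "\<And>A. (\<lambda>n. snorm (average n A - sm (ip u A) u)) \<longlonglongrightarrow> 0"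
  shows sip_ergodic
  unfolding sip_ergodic_def
proof (intro allI impI)
  fix X :: "nat \<Rightarrow> 'a"
  assume invariant: "(\<lambda>n. snorm (\<tau> (X n) - X n)) \<longlonglongrightarrow> 0" and "snorm_Cauchy X"
  obtain \<alpha> where \<alpha>: "(\<lambda>m. ip u (X m)) \<longlonglongrightarrow> \<alpha>"
    using Cauchy_ip_unit[OF \<open>snorm_Cauchy X\<close>] by (auto simp: Cauchy_convergent_iff convergent_def)
  have "snorm (X m - sm \<alpha> u) \<le> snorm (X m - sm (ip u (X m)) u) + cmod (ip u (X m) - \<alpha>)" for m
    using snorm_triangle_diff[of "X m" "sm \<alpha> u" "sm (ip u (X m)) u"]
    by (simp add: snorm_scale snorm_unit flip: scale_left_diff_distrib)
  moreover have "(\<lambda>m. snorm (X m - sm (ip u (X m)) u) + cmod (ip u (X m) - \<alpha>)) \<longlonglongrightarrow> 0"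
    using snorm_sub_ip_unit_tendsto_zero[OF assms invariant \<open>snorm_Cauchy X\<close>]
      tendsto_norm_zero[OF LIM_zero[OF \<alpha>]]
    by (rule tendsto_add_zero)
  ultimately have "(\<lambda>m. snorm (X m - sm \<alpha> u)) \<longlonglongrightarrow> 0"
    by (intro snorm_tendsto_zeroI always_eventually allI)
  then show "\<exists>\<alpha>. (\<lambda>m. snorm (X m - sm \<alpha> u)) \<longlonglongrightarrow> 0"
    by blast
qed

end

lemma star_algebra_star_one:
  assumes "star_algebra sm st"
  shows "st 1 = 1"
  using assms unfolding star_algebra_def by (metis mult_1_left mult_1_right)

lemma star_dynamical_system_sip_contraction_unit:
  assumes "star_dynamical_system sm st \<phi> \<tau>"
  shows "sip_contraction_unit sm (\<lambda>A B. \<phi> (st A * B)) \<tau> 1"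
proof -
  have algebra: "star_algebra sm st" and state: "is_state sm st \<phi>"
    and linear: "Vector_Spaces.linear sm sm \<tau>" and "\<tau> 1 = 1" and "\<phi> 1 = 1"
    and contractive: "\<And>A. Re (\<phi> (st (\<tau> A) * \<tau> A)) \<le> Re (\<phi> (st A * A))"
    using assms unfolding star_dynamical_system_def is_state_def by auto
  have \<phi>_add: "\<phi> (A + B) = \<phi> A + \<phi> B" and \<phi>_scale: "\<phi> (sm c A) = c * \<phi> A" for A B c
    using state unfolding is_state_def Vector_Spaces.linear_iff by auto
  have "vector_space sm"
    and scale_mult_left: "sm c A * B = sm c (A * B)"
    and scale_mult_right: "A * sm c B = sm c (A * B)"
    and st_add: "st (A + B) = st A + st B" and st_scale: "st (sm c A) = sm (cnj c) (st A)" for c A B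
    using algebra unfolding star_algebra_def by auto
  have sip: "semi_inner_product sm (\<lambda>A B. \<phi> (st A * B))"
    using state
    by (intro semi_inner_product.intro semi_inner_product_axioms.intro \<open>vector_space sm\<close>)
      (auto simp: is_state_def \<phi>_add \<phi>_scale st_add st_scale scale_mult_left scale_mult_right
        distrib_left distrib_right)
  interpret semi_inner_product sm "\<lambda>A B. \<phi> (st A * B)"
    by (fact sip)
  show ?thesis
    by (intro sip_contraction_unit.intro sip_contraction.intro sip_contraction_axioms.intro
        sip_contraction_unit_axioms.intro sip linear)
      (simp_all add: snorm_def contractive \<open>\<tau> 1 = 1\<close> star_algebra_star_one[OF algebra] \<open>\<phi> 1 = 1\<close>)
qed

theorem proposition4p5:
  fixes sm :: "complex \<Rightarrow> 'a::ring_1 \<Rightarrow> 'a" and st :: "'a \<Rightarrow> 'a"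
    and \<phi> :: "'a \<Rightarrow> complex" and \<tau> :: "'a \<Rightarrow> 'a" and T :: "'a set"
  assumes "star_dynamical_system sm st \<phi> \<tau>"
    and "phi_total sm st \<phi> T"
  shows "(ergodic sm st \<phi> \<tau> \<longrightarrow>
            (\<forall>A. (\<lambda>n. phi_norm st \<phi> (avg_dev sm \<phi> \<tau> A n)) \<longlonglongrightarrow> 0))
       \<and> ((\<forall>A\<in>T. (\<lambda>n. phi_norm st \<phi> (avg_dev sm \<phi> \<tau> A n)) \<longlonglongrightarrow> 0) \<longrightarrow>
            ergodic sm st \<phi> \<tau>)"
proof -
  interpret sip_contraction_unit sm "\<lambda>A B. \<phi> (st A * B)" \<tau> 1
    using assms(1) by (rule star_dynamical_system_sip_contraction_unit)
  have "st 1 = 1"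
    using assms(1) star_algebra_star_one unfolding star_dynamical_system_def by blast
  have phi_norm: "phi_norm st \<phi> = snorm"
    by (simp add: fun_eq_iff phi_norm_def snorm_def)
  have avg_dev: "avg_dev sm \<phi> \<tau> A n = average n A - sm (\<phi> (st 1 * A)) 1" for A n
    by (simp add: avg_dev_def average_def \<open>st 1 = 1\<close>)
  have ergodic: "ergodic sm st \<phi> \<tau> \<longleftrightarrow> sip_ergodic"
    by (simp add: ergodic_def sip_ergodic_def snorm_Cauchy_def phi_norm)
  have dense: "\<forall>A. \<forall>\<epsilon>>0. \<exists>B\<in>span T. snorm (A - B) < \<epsilon>"
    using assms(2) by (simp add: phi_total_def phi_norm)
  show ?thesis
    unfolding phi_norm avg_dev ergodic
    using sip_ergodic_imp_average_tendsto average_tendsto_imp_sip_ergodic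
      average_tendsto_on_dense[OF dense]
    by blast
qed

end
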